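(* Let $\mathsf{M}^s=\{\langle v,\mathfrak{R}\rangle:\mathfrak{R}\text{ is symmetric}\}$ and $\mathsf{M}^n=\{\langle v,\mathfrak{R}\rangle:\text{for all }\varphi,\psi,\ \langle\neg\varphi,\psi\rangle\in\mathfrak{R}\Rightarrow\langle\varphi,\psi\rangle\in\mathfrak{R}\}$ (with $v$ ranging over all valuations). Neither $\mathsf{M}^s$ nor $\mathsf{M}^n$ is definable.
   Context: Language: propositional letters $\Phi=\{p_0,p_1,\dots\}$; connectives $\neg$, $\lor,\wedge,\to,\leftrightarrow,\vartriangle,\looparrowright$; $\mathsf{FOR}$ the set of all formulas. An Epstein model is $\langle v,\mathfrak{R}\rangle$ with $v:\Phi\to\{0,1\}$ and $\mathfrak{R}\subseteq\mathsf{FOR}^2$; truth: letters via $v$, boolean connectives classical, $\langle v,\mathfrak{R}\rangle\vDash\varphi\vartriangle\psi$ iff both true and $\langle\varphi,\psi\rangle\in\mathfrak{R}$; $\langle v,\mathfrak{R}\rangle\vDash\varphi\looparrowright\psi$ iff $\varphi\to\psi$ true and $\langle\varphi,\psi\rangle\in\mathfrak{R}$. A set $\mathsf{K}$ of Epstein models is definable iff there is $\Gamma\subseteq\mathsf{FOR}$ such that for every Epstein model $\mathfrak{M}$: $\mathfrak{M}\vDash\gamma$ for all $\gamma\in\Gamma$ iff $\mathfrak{M}\in\mathsf{K}$. *)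

theory Defs
  imports Main
begin

datatype form =
    Var nat
  | Neg form
  | Disj form form
  | Conj form form
  | Imp form form
  | Iff form form
  | RelConj form form
  | RelImp form form

type_synonym model = "(nat \<Rightarrow> bool) \<times> (form \<times> form) set"

fun sat :: "model \<Rightarrow> form \<Rightarrow> bool" where
  "sat M (Var n) = fst M n"
| "sat M (Neg a) = (\<not> sat M a)"
| "sat M (Disj a b) = (sat M a \<or> sat M b)"
| "sat M (Conj a b) = (sat M a \<and> sat M b)"
| "sat M (Imp a b) = (sat M a \<longrightarrow> sat M b)"
| "sat M (Iff a b) = (sat M a \<longleftrightarrow> sat M b)"
| "sat M (RelConj a b) = (sat M a \<and> sat M b \<and> (a, b) \<in> snd M)"
| "sat M (RelImp a b) = ((sat M a \<longrightarrow> sat M b) \<and> (a, b) \<in> snd M)"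

definition definable :: "model set \<Rightarrow> bool" where
  "definable K \<longleftrightarrow> (\<exists>\<Gamma> :: form set. \<forall>M. (\<forall>\<gamma>\<in>\<Gamma>. sat M \<gamma>) \<longleftrightarrow> M \<in> K)"

definition M_s :: "model set" where
  "M_s = {M. sym (snd M)}"

definition M_n :: "model set" where
  "M_n = {M. \<forall>\<phi> \<psi>. (Neg \<phi>, \<psi>) \<in> snd M \<longrightarrow> (\<phi>, \<psi>) \<in> snd M}"

end

theory Submission
  imports Defs
begin

text \<open>A pair \<open>(\<phi>, \<psi>)\<close> with \<open>\<phi>\<close> true and \<open>\<psi>\<close> false is never consulted by the semantics,
  since both relational connectives also demand the truth of \<open>\<phi> \<rightarrow> \<psi>\<close>. Deleting such a pair from
  the full relation therefore changes no truth value, but destroys symmetry (the converse pair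
  stays) and closure under stripping a negation (\<open>(\<not>\<phi>, \<not>\<phi>)\<close> stays).\<close>

lemma definable_sat_equiv:
  assumes "definable K" and "\<And>\<phi>. sat M \<phi> = sat N \<phi>"
  shows "M \<in> K \<longleftrightarrow> N \<in> K"
  using assms unfolding definable_def by metis

lemma sat_Diff_true_false_pair:
  assumes "sat (v, R) \<phi>" and "\<not> sat (v, R) \<psi>"
  shows "sat (v, R - {(\<phi>, \<psi>)}) \<chi> = sat (v, R) \<chi>"
  using assms by (induction \<chi>) auto

lemma not_definable_by_true_false_pair:
  assumes "(v, R) \<in> K" and "(v, R - {(\<phi>, \<psi>)}) \<notin> K"
    and "sat (v, R) \<phi>" and "\<not> sat (v, R) \<psi>"
  shows "\<not> definable K"
  using definable_sat_equiv[of K "(v, R)" "(v, R - {(\<phi>, \<psi>)})"]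
    sat_Diff_true_false_pair[OF assms(3,4)] assms(1,2) by auto

theorem mainTheorem12:
  shows "\<not> definable M_s \<and> \<not> definable M_n"
proof
  let ?v = "\<lambda>_. True" and ?p = "Var 0"
  show "\<not> definable M_s"
    by (rule not_definable_by_true_false_pair[where v = ?v and R = UNIV
          and \<phi> = ?p and \<psi> = "Neg ?p"])
       (auto simp: M_s_def sym_def)
  show "\<not> definable M_n"
    by (rule not_definable_by_true_false_pair[where v = ?v and R = UNIV
          and \<phi> = ?p and \<psi> = "Neg ?p"])
       (auto simp: M_n_def)
qed

end
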